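(* Let $\mathcal{T}$ be a tree with costs $c:V(\mathcal{T})\to\mathbb{R}_{>0}$, let $a\ge 0$ be such that some vertex $v$ has $c(v)\le a$, and let $\mathcal{T}_{\mathcal{Z}}$ be the auxiliary tree constructed as described (for any choices made in the construction), with vertex costs given by $c$. Then $\texttt{OPT}(\mathcal{T}_{\mathcal{Z}},c)\le\texttt{OPT}(\mathcal{T},c)$.
   Context: Search model: a query to $v$ costs $c(v)$ and returns either that $v$ is the target or the component of (tree)$-v$ containing the target. A decision tree for a tree $T$ is (recursively) a rooted tree whose root is a vertex $v$ of $T$ and whose root subtrees are decision trees for the components of $T-v$, one per component; its cost is the maximum over targets $x$ of the total cost of the vertices on the root-to-$x$ path, and $\texttt{OPT}$ is the minimum cost over all decision trees. A heavy module with respect to $a$ is a set $H\subseteq V(\mathcal{T})$ with $\mathcal{T}[H]$ connected, $c(v)>a$ for all $v\in H$, and maximal with these properties. For $S\subseteq V(\mathcal{T})$, $\mathcal{T}\langle S\rangle$ is the minimal subtree containing $S$; $\mathcal{P}_{\mathcal{T}}(u,v)$ is the set of vertices on the $u$–$v$ path excluding $u,v$. Construction: $\mathcal{X}$ contains one arbitrarily chosen vertex from each heavy module with respect to $a$; $\mathcal{Y}=\mathcal{X}\cup\{v\in V(\mathcal{T}\langle\mathcal{X}\rangle):\deg_{\mathcal{T}\langle\mathcal{X}\rangle}(v)\ge3\}$; $\mathcal{Z}$ consists of $\mathcal{Y}$ together with, for every pair $u,v\in\mathcal{Y}$ with $\mathcal{P}_{\mathcal{T}}(u,v)\ne\emptyset$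 and $\mathcal{P}_{\mathcal{T}}(u,v)\cap\mathcal{Y}=\emptyset$, a minimum-cost vertex of $\mathcal{P}_{\mathcal{T}}(u,v)$. $\mathcal{T}_{\mathcal{Z}}$ has vertex set $\mathcal{Z}$ and edges $uv$ for all $u,v\in\mathcal{Z}$ with $\mathcal{P}_{\mathcal{T}}(u,v)\cap\mathcal{Z}=\emptyset$. *)

theory Defs
  imports Complex_Main
begin

definition is_path :: "('a \<Rightarrow> 'a \<Rightarrow> bool) \<Rightarrow> 'a list \<Rightarrow> bool" where
  "is_path E xs \<longleftrightarrow> xs \<noteq> [] \<and> distinct xs \<and>
     (\<forall>i. Suc i < length xs \<longrightarrow> E (xs ! i) (xs ! Suc i))"

definition is_tree :: "'a set \<Rightarrow> ('a \<Rightarrow> 'a \<Rightarrow> bool) \<Rightarrow> bool" where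
  "is_tree V E \<longleftrightarrow> finite V \<and> V \<noteq> {} \<and>
     (\<forall>u v. E u v \<longrightarrow> u \<in> V \<and> v \<in> V \<and> u \<noteq> v \<and> E v u) \<and>
     (\<forall>u\<in>V. \<forall>v\<in>V. \<exists>!xs. is_path E xs \<and> hd xs = u \<and> last xs = v)"

definition tpath :: "('a \<Rightarrow> 'a \<Rightarrow> bool) \<Rightarrow> 'a \<Rightarrow> 'a \<Rightarrow> 'a list" where
  "tpath E u v = (THE xs. is_path E xs \<and> hd xs = u \<and> last xs = v)"

definition Pint :: "('a \<Rightarrow> 'a \<Rightarrow> bool) \<Rightarrow> 'a \<Rightarrow> 'a \<Rightarrow> 'a set" where
  "Pint E u v = set (tpath E u v) - {u, v}"

definition reach_in :: "('a \<Rightarrow> 'a \<Rightarrow> bool) \<Rightarrow> 'a set \<Rightarrow> 'a \<Rightarrow> 'a \<Rightarrow> bool" where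
  "reach_in E S = (\<lambda>x y. x \<in> S \<and> y \<in> S \<and> E x y)\<^sup>*\<^sup>*"

definition connected_set :: "('a \<Rightarrow> 'a \<Rightarrow> bool) \<Rightarrow> 'a set \<Rightarrow> bool" where
  "connected_set E S \<longleftrightarrow> S \<noteq> {} \<and> (\<forall>x\<in>S. \<forall>y\<in>S. reach_in E S x y)"

definition comps :: "('a \<Rightarrow> 'a \<Rightarrow> bool) \<Rightarrow> 'a set \<Rightarrow> 'a set set" where
  "comps E S = {{y \<in> S. reach_in E S x y} | x. x \<in> S}"

datatype 'a dtree = Node 'a "'a dtree list"

fun dt_verts :: "'a dtree \<Rightarrow> 'a set" where
  "dt_verts (Node v ts) = insert v (\<Union>t\<in>set ts. dt_verts t)"

fun is_dt :: "('a \<Rightarrow> 'a \<Rightarrow> bool) \<Rightarrow> 'a set \<Rightarrow> 'a dtree \<Rightarrow> bool" where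
  "is_dt E S (Node v ts) \<longleftrightarrow> v \<in> S \<and> distinct (map dt_verts ts) \<and>
     set (map dt_verts ts) = comps E (S - {v}) \<and>
     list_all (\<lambda>t. is_dt E (dt_verts t) t) ts"

text \<open>Cost: maximum over targets of the total cost along the root-to-target path.\<close>
fun dt_cost :: "('a \<Rightarrow> real) \<Rightarrow> 'a dtree \<Rightarrow> real" where
  "dt_cost c (Node v ts) = c v + foldr max (map (dt_cost c) ts) 0"

definition OPT :: "('a \<Rightarrow> 'a \<Rightarrow> bool) \<Rightarrow> 'a set \<Rightarrow> ('a \<Rightarrow> real) \<Rightarrow> real" where
  "OPT E S c = (if S = {} then 0 else Inf {dt_cost c t | t. is_dt E S t})"

definition heavy_module :: "'a set \<Rightarrow> ('a \<Rightarrow> 'a \<Rightarrow> bool) \<Rightarrow> ('a \<Rightarrow> real) \<Rightarrow> real \<Rightarrow> 'a set \<Rightarrow> bool" where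
  "heavy_module V E c a H \<longleftrightarrow>
     (let good = (\<lambda>H. H \<subseteq> V \<and> connected_set E H \<and> (\<forall>v\<in>H. c v > a))
      in good H \<and> (\<forall>H'. good H' \<and> H \<subseteq> H' \<longrightarrow> H' = H))"

definition span :: "'a set \<Rightarrow> ('a \<Rightarrow> 'a \<Rightarrow> bool) \<Rightarrow> 'a set \<Rightarrow> 'a set" where
  "span V E S = \<Inter>{W. S \<subseteq> W \<and> W \<subseteq> V \<and> connected_set E W}"

definition deg_in :: "('a \<Rightarrow> 'a \<Rightarrow> bool) \<Rightarrow> 'a set \<Rightarrow> 'a \<Rightarrow> nat" where
  "deg_in E W v = card {w \<in> W. E v w}"

definition valid_X :: "'a set \<Rightarrow> ('a \<Rightarrow> 'a \<Rightarrow> bool) \<Rightarrow> ('a \<Rightarrow> real) \<Rightarrow> real \<Rightarrow> 'a set \<Rightarrow> bool" where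
  "valid_X V E c a X \<longleftrightarrow>
     (\<forall>x\<in>X. \<exists>H. heavy_module V E c a H \<and> x \<in> H) \<and>
     (\<forall>H. heavy_module V E c a H \<longrightarrow> card (X \<inter> H) = 1)"

definition Y_of :: "'a set \<Rightarrow> ('a \<Rightarrow> 'a \<Rightarrow> bool) \<Rightarrow> 'a set \<Rightarrow> 'a set" where
  "Y_of V E X = X \<union> {v \<in> span V E X. deg_in E (span V E X) v \<ge> 3}"

definition valid_pick :: "('a \<Rightarrow> 'a \<Rightarrow> bool) \<Rightarrow> ('a \<Rightarrow> real) \<Rightarrow> 'a set \<Rightarrow> ('a \<Rightarrow> 'a \<Rightarrow> 'a) \<Rightarrow> bool" where
  "valid_pick E c Y f \<longleftrightarrow>
     (\<forall>u\<in>Y. \<forall>v\<in>Y. Pint E u v \<noteq> {} \<and> Pint E u v \<inter> Y = {} \<longrightarrow>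
        f u v = f v u \<and> f u v \<in> Pint E u v \<and> (\<forall>w\<in>Pint E u v. c (f u v) \<le> c w))"

definition Z_of :: "('a \<Rightarrow> 'a \<Rightarrow> bool) \<Rightarrow> 'a set \<Rightarrow> ('a \<Rightarrow> 'a \<Rightarrow> 'a) \<Rightarrow> 'a set" where
  "Z_of E Y f = Y \<union> {f u v | u v. u \<in> Y \<and> v \<in> Y \<and> Pint E u v \<noteq> {} \<and> Pint E u v \<inter> Y = {}}"

definition EZ :: "('a \<Rightarrow> 'a \<Rightarrow> bool) \<Rightarrow> 'a set \<Rightarrow> 'a \<Rightarrow> 'a \<Rightarrow> bool" where
  "EZ E Z u v \<longleftrightarrow> u \<in> Z \<and> v \<in> Z \<and> u \<noteq> v \<and> Pint E u v \<inter> Z = {}"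

end

theory Submission
  imports Defs
begin

text \<open>A decision tree for \<open>T\<close> projects onto one for \<open>T\<^sub>Z\<close> of no larger cost. Descend
  the tree: a query at \<open>v \<in> Z\<close> is kept; if no path between vertices of \<open>Z\<close> passes
  through \<open>v\<close>, the query is dropped; otherwise it is replaced by a vertex \<open>p \<in> Z\<close> with
  \<open>c p \<le> c v\<close> lying on every such path through \<open>v\<close>. Every component of \<open>T\<^sub>Z - p\<close> is then
  the trace on \<open>Z\<close> of a connected piece of \<open>T - v\<close>, so the subtree for the component of
  \<open>T - v\<close> containing that piece handles it.

  For the constructed \<open>Z\<close> the vertex \<open>p\<close> exists: \<open>v\<close> lies in the span of \<open>X\<close> and is not
  in \<open>Y\<close>, so it separates no three vertices of \<open>Y\<close> pairwise, and the vertices of \<open>Y\<close>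
  fall on just two sides of \<open>v\<close>. If \<open>u\<close> and \<open>w\<close> are the vertices of \<open>Y\<close> nearest to \<open>v\<close>
  on the two sides, the interior of the \<open>u\<close>-\<open>w\<close> path contains \<open>v\<close> but no vertex of \<open>Y\<close>,
  and its chosen minimum-cost vertex \<open>f u w\<close> serves as \<open>p\<close>.\<close>

lemma is_path_iff: "is_path E xs \<longleftrightarrow> xs \<noteq> [] \<and> distinct xs \<and> successively E xs"
  unfolding is_path_def successively_conv_nth by blast

definition is_walk :: "('a \<Rightarrow> 'a \<Rightarrow> bool) \<Rightarrow> 'a list \<Rightarrow> bool" where
  "is_walk E xs \<longleftrightarrow> xs \<noteq> [] \<and> successively E xs"

lemma is_walk_append:
  "is_walk E xs \<Longrightarrow> is_walk E ys \<Longrightarrow> last xs = hd ys \<Longrightarrow> is_walk E (xs @ tl ys)"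
  unfolding is_walk_def by (cases ys) (auto simp: successively_append_iff successively_Cons)

lemma last_append_tl: "xs \<noteq> [] \<Longrightarrow> ys \<noteq> [] \<Longrightarrow> last xs = hd ys \<Longrightarrow> last (xs @ tl ys) = last ys"
  by (cases ys) auto

subsection \<open>Reachability and components\<close>

lemma reach_in_refl: "reach_in E A x x"
  unfolding reach_in_def by simp

lemma reach_in_ConsI: "x \<in> A \<Longrightarrow> y \<in> A \<Longrightarrow> E x y \<Longrightarrow> reach_in E A y z \<Longrightarrow> reach_in E A x z"
  unfolding reach_in_def by (rule converse_rtranclp_into_rtranclp[of _ x y]) simp_all

lemma reach_in_snocI: "reach_in E A x y \<Longrightarrow> y \<in> A \<Longrightarrow> z \<in> A \<Longrightarrow> E y z \<Longrightarrow> reach_in E A x z"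
  unfolding reach_in_def by (rule rtranclp.rtrancl_into_rtrancl[of _ x y]) simp_all

lemma reach_in_trans: "reach_in E A x y \<Longrightarrow> reach_in E A y z \<Longrightarrow> reach_in E A x z"
  unfolding reach_in_def by (rule rtranclp_trans)

lemma reach_in_sym: "symp E \<Longrightarrow> reach_in E A x y \<Longrightarrow> reach_in E A y x"
  unfolding reach_in_def by (metis (no_types, lifting) symp_def symp_rtranclp)

lemma reach_in_mono: "reach_in E A x y \<Longrightarrow> A \<subseteq> B \<Longrightarrow> reach_in E B x y"
  unfolding reach_in_def by (rule rtranclp_mono[THEN predicate2D, rotated]) auto

lemma reach_in_induct [consumes 1, case_names base step]:
  assumes "reach_in E A x y" "P x"
    and "\<And>y z. reach_in E A x y \<Longrightarrow> P y \<Longrightarrow> y \<in> A \<Longrightarrow> z \<in> A \<Longrightarrow> E y z \<Longrightarrow> P z"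
  shows "P y"
  using assms(1) unfolding reach_in_def
proof (induction rule: rtranclp_induct)
  case base
  show ?case using assms(2) .
next
  case (step y z)
  then show ?case using assms(3)[of y z] unfolding reach_in_def by blast
qed

lemma reach_in_if_walk: "is_walk E xs \<Longrightarrow> set xs \<subseteq> A \<Longrightarrow> reach_in E A (hd xs) (last xs)"
proof (induction xs)
  case Nil
  then show ?case by (simp add: is_walk_def)
next
  case (Cons x xs)
  show ?case
  proof (cases "xs = []")
    case True
    then show ?thesis by (simp add: reach_in_refl)
  next
    case False
    then have "E x (hd xs)" "is_walk E xs"
      using Cons.prems by (auto simp: is_walk_def successively_Cons)
    moreover have "hd xs \<in> A" using False Cons.prems by auto
    ultimately show ?thesis using Cons False by (auto intro: reach_in_ConsI[of x A "hd xs"])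
  qed
qed

lemma walk_if_reach_in:
  assumes "reach_in E A x y" "x \<in> A"
  obtains xs where "is_walk E xs" "hd xs = x" "last xs = y" "set xs \<subseteq> A"
proof -
  from assms(1) have "\<exists>xs. is_walk E xs \<and> hd xs = x \<and> last xs = y \<and> set xs \<subseteq> A"
  proof (induction rule: reach_in_induct)
    case base
    show ?case using assms(2) by (intro exI[of _ "[x]"]) (auto simp: is_walk_def)
  next
    case (step y z)
    then obtain xs where "is_walk E xs" "hd xs = x" "last xs = y" "set xs \<subseteq> A" by blast
    moreover have "is_walk E (xs @ tl [y, z])"
      using calculation step by (intro is_walk_append) (auto simp: is_walk_def)
    ultimately show ?case using step by (intro exI[of _ "xs @ [z]"]) (auto simp: is_walk_def)
  qed
  then show ?thesis using that by blast
qed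

lemma connected_set_reach_class:
  assumes "symp E" "x \<in> A"
  shows "connected_set E {y \<in> A. reach_in E A x y}"
proof -
  define K where "K = {y \<in> A. reach_in E A x y}"
  have from_x: "reach_in E K x y" if "reach_in E A x y" for y
    using that
  proof (induction rule: reach_in_induct)
    case base
    show ?case by (rule reach_in_refl)
  next
    case (step y z)
    have "y \<in> K" using step.hyps(1,2) unfolding K_def by simp
    moreover have "z \<in> K"
      using reach_in_snocI[OF step.hyps] step.hyps(3) unfolding K_def by simp
    ultimately show ?case by (intro reach_in_snocI[OF step.IH _ _ step.hyps(4)])
  qed
  have "reach_in E K y z" if "y \<in> K" "z \<in> K" for y z
  proof -
    have "reach_in E K x y" "reach_in E K x z" using that from_x unfolding K_def by auto
    then show ?thesis by (metis reach_in_sym[OF assms(1)] reach_in_trans)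
  qed
  moreover have "x \<in> K" using assms(2) unfolding K_def by (simp add: reach_in_refl)
  ultimately show ?thesis unfolding connected_set_def K_def[symmetric] by blast
qed

lemma comps_subset: "C \<in> comps E A \<Longrightarrow> C \<subseteq> A"
  unfolding comps_def by auto

lemma comps_nonempty: "C \<in> comps E A \<Longrightarrow> C \<noteq> {}"
  unfolding comps_def by (auto simp: reach_in_refl)

lemma finite_comps: "finite A \<Longrightarrow> finite (comps E A)"
  by (rule finite_subset[of _ "Pow A"]) (auto simp: comps_def)

lemma Union_comps: "\<Union>(comps E A) = A"
  unfolding comps_def by (blast intro: reach_in_refl)

lemma connected_subset_in_comps:
  assumes "connected_set E B" "B \<subseteq> A"
  obtains C where "C \<in> comps E A" "B \<subseteq> C"
proof -
  obtain x where x: "x \<in> B" using assms(1) unfolding connected_set_def by blast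
  have "B \<subseteq> {y \<in> A. reach_in E A x y}"
    using assms x reach_in_mono[OF _ assms(2)] unfolding connected_set_def by blast
  moreover have "{y \<in> A. reach_in E A x y} \<in> comps E A"
    using x assms(2) unfolding comps_def by blast
  ultimately show ?thesis using that by blast
qed

subsection \<open>Decision trees\<close>

lemma dt_verts_if_is_dt: "is_dt G S t \<Longrightarrow> dt_verts t = S"
proof (cases t)
  case (Node v ts)
  assume "is_dt G S t"
  then have "v \<in> S" "dt_verts t = insert v (\<Union>(comps G (S - {v})))"
    using Node by auto
  then show ?thesis by (auto simp: Union_comps)
qed

lemma is_dt_NodeI:
  assumes "p \<in> A" "finite A" "\<And>Q. Q \<in> comps G (A - {p}) \<Longrightarrow> is_dt G Q (g Q)"
  obtains ts where "is_dt G A (Node p ts)" "set ts = g ` comps G (A - {p})"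
proof -
  obtain qs where qs: "set qs = comps G (A - {p})" "distinct qs"
    using finite_distinct_list[OF finite_comps[of "A - {p}" G]] assms(2) by auto
  have verts: "dt_verts (g Q) = Q" if "Q \<in> set qs" for Q
    using that qs(1) assms(3) dt_verts_if_is_dt by blast
  then have "map dt_verts (map g qs) = qs" by (induction qs) auto
  moreover have "list_all (\<lambda>t. is_dt G (dt_verts t) t) (map g qs)"
    using qs(1) assms(3) verts by (auto simp: list_all_iff)
  ultimately have "is_dt G A (Node p (map g qs))" using assms(1) qs by simp
  then show ?thesis by (rule that) (simp add: qs(1))
qed

lemma foldr_max_nonneg: "(0::real) \<le> foldr max xs 0"
  by (induction xs) (auto simp: le_max_iff_disj)

lemma foldr_max_upper: "x \<in> set xs \<Longrightarrow> x \<le> foldr max xs (0::real)"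
  by (induction xs) (auto simp: le_max_iff_disj)

lemma foldr_max_least: "(\<And>x. x \<in> set xs \<Longrightarrow> x \<le> M) \<Longrightarrow> (0::real) \<le> M \<Longrightarrow> foldr max xs 0 \<le> M"
  by (induction xs) auto

lemma dt_cost_Node_le:
  "(\<And>t. t \<in> set ts \<Longrightarrow> dt_cost c t \<le> M) \<Longrightarrow> 0 \<le> M \<Longrightarrow> dt_cost c (Node v ts) \<le> c v + M"
  using foldr_max_least[of "map (dt_cost c) ts" M] by auto

lemma dt_cost_nonneg: "(\<And>v. v \<in> dt_verts t \<Longrightarrow> 0 \<le> c v) \<Longrightarrow> 0 \<le> dt_cost c t"
  by (cases t) (auto intro: add_nonneg_nonneg foldr_max_nonneg)

lemma ex_dt_with_root:
  assumes "p \<in> A" "finite A" "0 \<le> M"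
    and "\<And>Q. Q \<in> comps G (A - {p}) \<Longrightarrow> \<exists>t. is_dt G Q t \<and> dt_cost c t \<le> M"
  shows "\<exists>t. is_dt G A t \<and> dt_cost c t \<le> c p + M"
proof -
  obtain g where g: "\<And>Q. Q \<in> comps G (A - {p}) \<Longrightarrow> is_dt G Q (g Q) \<and> dt_cost c (g Q) \<le> M"
    using assms(4) by metis
  then obtain ts where "is_dt G A (Node p ts)" "set ts = g ` comps G (A - {p})"
    using is_dt_NodeI[OF assms(1,2), of G g] by blast
  moreover have "dt_cost c (Node p ts) \<le> c p + M"
    using g calculation(2) assms(3) by (intro dt_cost_Node_le) auto
  ultimately show ?thesis by blast
qed

lemma ex_is_dt: "finite S \<Longrightarrow> S \<noteq> {} \<Longrightarrow> \<exists>t. is_dt G S t"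
proof (induction "card S" arbitrary: S rule: less_induct)
  case less
  obtain p where p: "p \<in> S" using less.prems by blast
  have "\<exists>t. is_dt G Q t" if "Q \<in> comps G (S - {p})" for Q
  proof -
    have "Q \<subset> S" using that p comps_subset by blast
    then have "card Q < card S" "finite Q"
      using less.prems(1) by (auto intro: psubset_card_mono finite_subset)
    then show ?thesis using less.hyps that comps_nonempty by blast
  qed
  then obtain g where "\<And>Q. Q \<in> comps G (S - {p}) \<Longrightarrow> is_dt G Q (g Q)" by metis
  then show ?case using is_dt_NodeI[OF p less.prems(1)] by metis
qed

lemma OPT_le_dt_cost:
  assumes "is_dt G S t" "S \<noteq> {}" "\<And>v. v \<in> S \<Longrightarrow> 0 \<le> c v"
  shows "OPT G S c \<le> dt_cost c t"
proof -
  have "bdd_below {dt_cost c t | t. is_dt G S t}"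
    using assms(3) dt_verts_if_is_dt dt_cost_nonneg by (intro bdd_belowI[of _ 0]) fastforce
  then show ?thesis unfolding OPT_def using assms(1,2) by (auto intro: cInf_lower)
qed

lemma OPT_greatest:
  assumes "finite S" "S \<noteq> {}" "\<And>t. is_dt G S t \<Longrightarrow> m \<le> dt_cost c t"
  shows "m \<le> OPT G S c"
proof -
  have "{dt_cost c t | t. is_dt G S t} \<noteq> {}" using ex_is_dt[OF assms(1,2)] by blast
  then show ?thesis unfolding OPT_def using assms(2,3) by (auto intro: cInf_greatest)
qed

subsection \<open>Paths in a tree\<close>

locale tree_graph =
  fixes V :: "'a set" and E :: "'a \<Rightarrow> 'a \<Rightarrow> bool"
  assumes tree: "is_tree V E"
begin

lemma finite_V: "finite V"
  using tree unfolding is_tree_def by blast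

lemma V_nonempty: "V \<noteq> {}"
  using tree unfolding is_tree_def by blast

lemma edge_in_V: "E u v \<Longrightarrow> u \<in> V \<and> v \<in> V \<and> u \<noteq> v"
  using tree unfolding is_tree_def by blast

lemma edge_sym: "E u v \<Longrightarrow> E v u"
  using tree unfolding is_tree_def by blast

lemma symp_E: "symp E"
  using edge_sym by (rule sympI)

lemma ex1_path: "u \<in> V \<Longrightarrow> v \<in> V \<Longrightarrow> \<exists>!xs. is_path E xs \<and> hd xs = u \<and> last xs = v"
  using tree unfolding is_tree_def by blast

lemma is_walk_subset_V: "is_walk E xs \<Longrightarrow> hd xs \<in> V \<Longrightarrow> set xs \<subseteq> V"
proof (induction xs)
  case Nil
  then show ?case by simp
next
  case (Cons x xs)
  then show ?case by (cases xs) (auto simp: is_walk_def dest: edge_in_V)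
qed

lemma tpath_props:
  "u \<in> V \<Longrightarrow> v \<in> V \<Longrightarrow> is_path E (tpath E u v) \<and> hd (tpath E u v) = u \<and> last (tpath E u v) = v"
  unfolding tpath_def by (rule theI'[OF ex1_path])

lemma tpath_eqI:
  "u \<in> V \<Longrightarrow> v \<in> V \<Longrightarrow> is_path E xs \<Longrightarrow> hd xs = u \<Longrightarrow> last xs = v \<Longrightarrow> tpath E u v = xs"
  unfolding tpath_def by (rule the1_equality[OF ex1_path]) auto

lemma tpath_nonempty: "u \<in> V \<Longrightarrow> v \<in> V \<Longrightarrow> tpath E u v \<noteq> []"
  using tpath_props is_path_iff by blast

lemma distinct_tpath: "u \<in> V \<Longrightarrow> v \<in> V \<Longrightarrow> distinct (tpath E u v)"
  using tpath_props is_path_iff by blast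

lemma is_walk_tpath: "u \<in> V \<Longrightarrow> v \<in> V \<Longrightarrow> is_walk E (tpath E u v)"
  using tpath_props is_path_iff is_walk_def by blast

lemma hd_tpath: "u \<in> V \<Longrightarrow> v \<in> V \<Longrightarrow> hd (tpath E u v) = u"
  using tpath_props by blast

lemma last_tpath: "u \<in> V \<Longrightarrow> v \<in> V \<Longrightarrow> last (tpath E u v) = v"
  using tpath_props by blast

lemma set_tpath_subset_V: "u \<in> V \<Longrightarrow> v \<in> V \<Longrightarrow> set (tpath E u v) \<subseteq> V"
  using is_walk_subset_V is_walk_tpath hd_tpath by metis

lemma tpath_in_V: "x \<in> V \<Longrightarrow> y \<in> V \<Longrightarrow> v \<in> set (tpath E x y) \<Longrightarrow> v \<in> V"
  using set_tpath_subset_V by blast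

lemma start_in_tpath: "u \<in> V \<Longrightarrow> v \<in> V \<Longrightarrow> u \<in> set (tpath E u v)"
  using tpath_nonempty hd_tpath hd_in_set by metis

lemma end_in_tpath: "u \<in> V \<Longrightarrow> v \<in> V \<Longrightarrow> v \<in> set (tpath E u v)"
  using tpath_nonempty last_tpath last_in_set by metis

lemma tpath_refl: "u \<in> V \<Longrightarrow> tpath E u u = [u]"
  by (rule tpath_eqI) (auto simp: is_path_iff)

lemma tpath_rev:
  assumes "u \<in> V" "v \<in> V" shows "tpath E v u = rev (tpath E u v)"
proof -
  have s: "successively E (tpath E u v)" and d: "distinct (tpath E u v)" and n: "tpath E u v \<noteq> []"
    using tpath_props[OF assms] is_path_iff by blast+
  have "successively (\<lambda>x y. E y x) (tpath E u v)"
    using s by (rule successively_mono) (simp add: edge_sym)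
  then have "is_path E (rev (tpath E u v))" using d n by (simp add: is_path_iff)
  moreover have "hd (rev (tpath E u v)) = v" "last (rev (tpath E u v)) = u"
    using n hd_tpath[OF assms] last_tpath[OF assms] by (simp_all add: hd_rev last_rev)
  ultimately show ?thesis using tpath_eqI[OF assms(2,1)] by blast
qed

lemma set_tpath_commute: "u \<in> V \<Longrightarrow> v \<in> V \<Longrightarrow> set (tpath E v u) = set (tpath E u v)"
  by (metis set_rev tpath_rev)

lemma set_tpath_subset_walk:
  assumes "is_walk E xs" "hd xs \<in> V"
  shows "set (tpath E (hd xs) (last xs)) \<subseteq> set xs"
  using assms
proof (induction "length xs" arbitrary: xs rule: less_induct)
  case less
  have lV: "last xs \<in> V" using is_walk_subset_V[OF less.prems] less.prems by (auto simp: is_walk_def)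
  show ?case
  proof (cases "distinct xs")
    case True
    then have "is_path E xs" using less.prems by (auto simp: is_path_iff is_walk_def)
    then show ?thesis using tpath_eqI[OF less.prems(2) lV] by simp
  next
    case False
    then obtain a y b c where xs: "xs = a @ [y] @ b @ [y] @ c" using not_distinct_decomp by blast
    define ys where "ys = a @ [y] @ c"
    have w: "is_walk E ys" using less.prems(1) unfolding ys_def xs is_walk_def
      by (auto simp: successively_append_iff successively_Cons)
    have h: "hd ys = hd xs" "last ys = last xs" unfolding ys_def xs by (cases a; simp)+
    have "length ys < length xs" unfolding ys_def xs by simp
    then have "set (tpath E (hd ys) (last ys)) \<subseteq> set ys" using less.hyps w h less.prems by metis
    then show ?thesis using h unfolding ys_def xs by auto
  qed
qed

lemma set_tpath_triangle:
  assumes "x \<in> V" "m \<in> V" "y \<in> V"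
  shows "set (tpath E x y) \<subseteq> set (tpath E x m) \<union> set (tpath E m y)"
proof -
  have w: "is_walk E (tpath E x m @ tl (tpath E m y))"
    using assms by (intro is_walk_append is_walk_tpath) (auto simp: hd_tpath last_tpath)
  have h: "hd (tpath E x m @ tl (tpath E m y)) = x" using assms by (simp add: tpath_nonempty hd_tpath)
  have l: "last (tpath E x m @ tl (tpath E m y)) = y"
    using assms by (simp add: last_append_tl tpath_nonempty hd_tpath last_tpath)
  have "set (tpath E x y) \<subseteq> set (tpath E x m @ tl (tpath E m y))"
    using set_tpath_subset_walk[OF w] h l assms by simp
  also have "\<dots> \<subseteq> set (tpath E x m) \<union> set (tpath E m y)"
    by (cases "tpath E m y") auto
  finally show ?thesis .
qed

lemma tpath_split:
  assumes "x \<in> V" "y \<in> V" "tpath E x y = A @ v # B"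
  shows "tpath E x v = A @ [v]" "tpath E v y = v # B"
proof -
  have p: "is_path E (A @ v # B)" "hd (A @ v # B) = x" "last (A @ v # B) = y"
    using tpath_props[OF assms(1,2)] assms(3) by auto
  have vV: "v \<in> V" using set_tpath_subset_V[OF assms(1,2)] assms(3) by auto
  show "tpath E x v = A @ [v]"
  proof (rule tpath_eqI[OF assms(1) vV])
    show "is_path E (A @ [v])"
      using p(1) by (auto simp: is_path_iff successively_append_iff successively_Cons)
    show "hd (A @ [v]) = x" using p(2) by (cases A) auto
  qed simp
  show "tpath E v y = v # B"
    using p by (intro tpath_eqI[OF vV assms(2)])
      (auto simp: is_path_iff successively_append_iff successively_Cons)
qed

lemma tpath_splitE:
  assumes "x \<in> V" "y \<in> V" "v \<in> set (tpath E x y)"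
  obtains A B where "tpath E x y = A @ v # B" "tpath E x v = A @ [v]" "tpath E v y = v # B"
  using split_list[OF assms(3)] tpath_split[OF assms(1,2)] by metis

lemma set_tpath_split:
  assumes "x \<in> V" "y \<in> V" "v \<in> set (tpath E x y)"
  shows "set (tpath E x v) \<subseteq> set (tpath E x y)" "set (tpath E v y) \<subseteq> set (tpath E x y)"
    "set (tpath E x v) \<inter> set (tpath E v y) = {v}"
proof -
  obtain A B where ab: "tpath E x y = A @ v # B" "tpath E x v = A @ [v]" "tpath E v y = v # B"
    using tpath_splitE[OF assms] by blast
  have "distinct (A @ v # B)" using distinct_tpath[OF assms(1,2)] ab by simp
  then show "set (tpath E x v) \<subseteq> set (tpath E x y)" "set (tpath E v y) \<subseteq> set (tpath E x y)"
    "set (tpath E x v) \<inter> set (tpath E v y) = {v}" using ab by auto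
qed

lemma length_tpath_suffix_less:
  assumes "x \<in> V" "y \<in> V" "v \<in> set (tpath E x y)" "v \<noteq> x"
  shows "length (tpath E v y) < length (tpath E x y)"
proof -
  obtain A B where ab: "tpath E x y = A @ v # B" "tpath E x v = A @ [v]" "tpath E v y = v # B"
    using tpath_splitE[OF assms(1-3)] by blast
  have "A \<noteq> []" using hd_tpath[OF assms(1,2)] ab assms(4) by auto
  then show ?thesis using ab by simp
qed

lemma length_tpath_prefix_less:
  assumes "x \<in> V" "y \<in> V" "v \<in> set (tpath E x y)" "v \<noteq> y"
  shows "length (tpath E x v) < length (tpath E x y)"
proof -
  have vV: "v \<in> V" using tpath_in_V assms by blast
  have "v \<in> set (tpath E y x)" using assms set_tpath_commute by blast
  then have "length (tpath E v x) < length (tpath E y x)" using length_tpath_suffix_less assms by blast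
  then show ?thesis using tpath_rev[OF assms(1) vV] tpath_rev[OF assms(1,2)] by simp
qed

lemma tpath_betw_trans:
  assumes "x \<in> V" "y \<in> V" "b \<in> set (tpath E x y)" "a \<in> set (tpath E x b)"
  shows "b \<in> set (tpath E a y)"
proof -
  obtain A B where ab: "tpath E x y = A @ b # B" "tpath E x b = A @ [b]" "tpath E b y = b # B"
    using tpath_splitE[OF assms(1-3)] by blast
  show ?thesis
  proof (cases "a = b")
    case True then show ?thesis using start_in_tpath tpath_in_V assms by blast
  next
    case False
    then have "a \<in> set A" using assms(4) ab by auto
    then obtain A1 A2 where "A = A1 @ a # A2" using split_list by metis
    then have "tpath E x y = A1 @ a # (A2 @ b # B)" using ab by simp
    then have "tpath E a y = a # A2 @ b # B" using tpath_split(2)[OF assms(1,2)] by blast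
    then show ?thesis by simp
  qed
qed

text \<open>The median is the last vertex of the \<open>x\<close>-\<open>y\<close> path on the \<open>x\<close>-\<open>z\<close> path: the paths from
  it to \<open>y\<close> and to \<open>z\<close> meet only there, so together they form the \<open>y\<close>-\<open>z\<close> path.\<close>

lemma tpath_median:
  assumes "x \<in> V" "y \<in> V" "z \<in> V"
  shows "\<exists>m. m \<in> set (tpath E x y) \<and> m \<in> set (tpath E y z) \<and> m \<in> set (tpath E x z)"
proof -
  have "\<exists>w \<in> set (tpath E x y). w \<in> set (tpath E x z)" using start_in_tpath assms by blast
  then obtain A m B where amb: "tpath E x y = A @ m # B" "m \<in> set (tpath E x z)"
    "\<forall>w \<in> set B. w \<notin> set (tpath E x z)"
    using split_list_last_prop[of "tpath E x y" "\<lambda>w. w \<in> set (tpath E x z)"] by blast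
  have my: "tpath E m y = m # B" using tpath_split(2)[OF assms(1,2) amb(1)] .
  obtain C D where cd: "tpath E x z = C @ m # D" "tpath E m z = m # D"
    using tpath_splitE[OF assms(1,3) amb(2)] by blast
  have mV: "m \<in> V" using tpath_in_V assms amb(2) by blast
  define W where "W = tpath E y m @ tl (tpath E m z)"
  have W: "W = rev B @ m # D" unfolding W_def tpath_rev[OF mV assms(2)] my cd(2) by simp
  have d1: "distinct (m # B)" using distinct_tpath[OF mV assms(2)] my by simp
  have d2: "distinct (m # D)" using distinct_tpath[OF mV assms(3)] cd by simp
  have d3: "set B \<inter> set D = {}" using amb(3) cd(1) by auto
  have "distinct W" using d1 d2 d3 W by auto
  moreover have "is_walk E W" unfolding W_def
    using assms mV by (intro is_walk_append is_walk_tpath) (auto simp: hd_tpath last_tpath)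
  ultimately have "is_path E W" by (simp add: is_path_iff is_walk_def)
  moreover have "hd W = y" unfolding W_def using tpath_nonempty hd_tpath assms mV by simp
  moreover have "last W = z" unfolding W_def using tpath_nonempty hd_tpath last_tpath assms mV
    by (subst last_append_tl) auto
  ultimately have "tpath E y z = W" using tpath_eqI assms by blast
  then show ?thesis using W amb cd by auto
qed

lemma connected_set_tpath_subset:
  assumes "connected_set E S" "S \<subseteq> V" "x \<in> S" "y \<in> S"
  shows "set (tpath E x y) \<subseteq> S"
proof -
  have "reach_in E S x y" using assms unfolding connected_set_def by blast
  then obtain xs where xs: "is_walk E xs" "hd xs = x" "last xs = y" "set xs \<subseteq> S"
    using walk_if_reach_in assms(3) by metis
  then show ?thesis using set_tpath_subset_walk[OF xs(1)] assms by auto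
qed

lemma reach_in_if_tpath_subset: "a \<in> V \<Longrightarrow> b \<in> V \<Longrightarrow> set (tpath E a b) \<subseteq> A \<Longrightarrow> reach_in E A a b"
  using reach_in_if_walk[OF is_walk_tpath, of a b A] hd_tpath last_tpath by metis

lemma reach_in_Diff_iff:
  assumes "connected_set E S" "S \<subseteq> V" "x \<in> S - R" "y \<in> S - R"
  shows "reach_in E (S - R) x y \<longleftrightarrow> set (tpath E x y) \<inter> R = {}"
proof
  assume "reach_in E (S - R) x y"
  then obtain xs where xs: "is_walk E xs" "hd xs = x" "last xs = y" "set xs \<subseteq> S - R"
    using walk_if_reach_in assms(3) by metis
  then show "set (tpath E x y) \<inter> R = {}" using set_tpath_subset_walk[OF xs(1)] assms by auto
next
  assume "set (tpath E x y) \<inter> R = {}"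
  then have "set (tpath E x y) \<subseteq> S - R" using connected_set_tpath_subset assms by blast
  then show "reach_in E (S - R) x y"
    using reach_in_if_tpath_subset assms(2-4) by blast
qed

lemma connected_V: "connected_set E V"
  unfolding connected_set_def
  using V_nonempty reach_in_if_tpath_subset set_tpath_subset_V by blast

lemma connected_tpath_avoiding:
  assumes "connected_set E S" "S \<subseteq> V" "x \<in> S - R"
  shows "connected_set E {y \<in> S - R. set (tpath E x y) \<inter> R = {}}"
proof -
  have "{y \<in> S - R. set (tpath E x y) \<inter> R = {}} = {y \<in> S - R. reach_in E (S - R) x y}"
    using reach_in_Diff_iff[OF assms] by auto
  then show ?thesis using connected_set_reach_class[OF symp_E assms(3)] by simp
qed

lemma Union_tpath_subset_V: "X \<subseteq> V \<Longrightarrow> (\<Union>x\<in>X. \<Union>x'\<in>X. set (tpath E x x')) \<subseteq> V"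
  using set_tpath_subset_V by blast

lemma subset_Union_tpath: "X \<subseteq> V \<Longrightarrow> X \<subseteq> (\<Union>x\<in>X. \<Union>x'\<in>X. set (tpath E x x'))"
  using start_in_tpath by blast

lemma connected_Union_tpath:
  assumes "X \<subseteq> V" "X \<noteq> {}"
  shows "connected_set E (\<Union>x\<in>X. \<Union>x'\<in>X. set (tpath E x x'))" (is "connected_set E ?P")
proof -
  obtain x0 where x0: "x0 \<in> X" using assms(2) by blast
  have PV: "?P \<subseteq> V" using Union_tpath_subset_V[OF assms(1)] .
  have from_x0: "reach_in E ?P x0 w" if w: "w \<in> ?P" for w
  proof -
    obtain x x' where xx: "x \<in> X" "x' \<in> X" "w \<in> set (tpath E x x')" using w by blast
    have V: "x0 \<in> V" "x \<in> V" "x' \<in> V" using x0 xx(1,2) assms(1) by auto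
    have "set (tpath E x0 x) \<subseteq> ?P" using x0 xx(1) by blast
    then have r1: "reach_in E ?P x0 x" by (rule reach_in_if_tpath_subset[OF V(1,2)])
    have "set (tpath E x w) \<subseteq> set (tpath E x x')" by (rule set_tpath_split(1)[OF V(2,3) xx(3)])
    then have "set (tpath E x w) \<subseteq> ?P" using xx(1,2) by blast
    then have r2: "reach_in E ?P x w" by (rule reach_in_if_tpath_subset[OF V(2) subsetD[OF PV w]])
    show ?thesis using r1 r2 by (rule reach_in_trans)
  qed
  have "reach_in E ?P u w" if "u \<in> ?P" "w \<in> ?P" for u w
    using reach_in_trans[OF reach_in_sym[OF symp_E from_x0[OF that(1)]] from_x0[OF that(2)]] .
  moreover have "x0 \<in> ?P" using x0 assms(1) subset_Union_tpath by blast
  ultimately show ?thesis unfolding connected_set_def by blast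
qed

lemma span_eq_Union_tpath:
  assumes "X \<subseteq> V" "X \<noteq> {}"
  shows "span V E X = (\<Union>x\<in>X. \<Union>x'\<in>X. set (tpath E x x'))"
proof
  show "span V E X \<subseteq> (\<Union>x\<in>X. \<Union>x'\<in>X. set (tpath E x x'))"
    unfolding span_def using connected_Union_tpath[OF assms] Union_tpath_subset_V[OF assms(1)]
      subset_Union_tpath[OF assms(1)] by blast
  show "(\<Union>x\<in>X. \<Union>x'\<in>X. set (tpath E x x')) \<subseteq> span V E X"
    unfolding span_def
  proof (rule Inter_greatest)
    fix W assume "W \<in> {W. X \<subseteq> W \<and> W \<subseteq> V \<and> connected_set E W}"
    then show "(\<Union>x\<in>X. \<Union>x'\<in>X. set (tpath E x x')) \<subseteq> W"
      using connected_set_tpath_subset[of W] by blast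
  qed
qed

lemma
  assumes "X \<subseteq> V" "X \<noteq> {}"
  shows connected_span: "connected_set E (span V E X)"
    and span_subset_V: "span V E X \<subseteq> V"
    and subset_span: "X \<subseteq> span V E X"
  unfolding span_eq_Union_tpath[OF assms]
  by (fact connected_Union_tpath[OF assms] Union_tpath_subset_V[OF assms(1)]
    subset_Union_tpath[OF assms(1)])+

lemma Pint_subset: "Pint E u w \<subseteq> set (tpath E u w)"
  unfolding Pint_def by blast

lemma Pint_commute: "u \<in> V \<Longrightarrow> w \<in> V \<Longrightarrow> Pint E w u = Pint E u w"
  unfolding Pint_def using set_tpath_commute by blast

lemma notin_tpath_trans:
  "a \<in> V \<Longrightarrow> b \<in> V \<Longrightarrow> d \<in> V \<Longrightarrow> v \<notin> set (tpath E a b) \<Longrightarrow> v \<notin> set (tpath E b d) \<Longrightarrow>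
    v \<notin> set (tpath E a d)"
  using set_tpath_triangle by blast

lemma notin_tpath_commute: "a \<in> V \<Longrightarrow> b \<in> V \<Longrightarrow> v \<notin> set (tpath E a b) \<Longrightarrow> v \<notin> set (tpath E b a)"
  using set_tpath_commute by blast

lemma notin_tpath_via:
  "x \<in> V \<Longrightarrow> y \<in> V \<Longrightarrow> n \<in> V \<Longrightarrow> q \<notin> set (tpath E n x) \<Longrightarrow> q \<notin> set (tpath E n y) \<Longrightarrow>
    q \<notin> set (tpath E x y)"
  using notin_tpath_trans notin_tpath_commute by metis

lemma tpath_second_vertex:
  assumes "q \<in> V" "x \<in> V" "q \<noteq> x"
  obtains n where "E q n" "n \<in> set (tpath E q x)" "q \<notin> set (tpath E n x)"
proof -
  obtain r where r: "tpath E q x = q # r"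
    using tpath_nonempty[OF assms(1,2)] hd_tpath[OF assms(1,2)] by (cases "tpath E q x") auto
  have "r \<noteq> []" using r last_tpath[OF assms(1,2)] assms(3) by auto
  then obtain n r' where nr: "tpath E q x = [q] @ n # r'" using r by (cases r) auto
  then have "tpath E n x = n # r'" by (rule tpath_split(2)[OF assms(1,2)])
  moreover have "E q n" "distinct (q # n # r')"
    using nr tpath_props[OF assms(1,2)] by (simp_all add: is_path_iff)
  ultimately show ?thesis using that nr by simp
qed

text \<open>The first steps from \<open>q\<close> towards \<open>a\<close>, \<open>b\<close> and \<open>d\<close> are three distinct neighbours.\<close>

lemma three_le_deg_in:
  assumes S: "connected_set E S" "S \<subseteq> V" and "a \<in> S" "b \<in> S" "d \<in> S" "q \<notin> {a, b, d}"
    and "q \<in> set (tpath E a b)" "q \<in> set (tpath E a d)" "q \<in> set (tpath E b d)"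
  shows "3 \<le> deg_in E S q"
proof -
  have V: "a \<in> V" "b \<in> V" "d \<in> V" using assms(3-5) S(2) by auto
  have "q \<in> S" using assms(7) connected_set_tpath_subset[OF S assms(3,4)] by blast
  then have q: "q \<in> V" "\<And>x. x \<in> S \<Longrightarrow> set (tpath E q x) \<subseteq> S"
    using S(2) connected_set_tpath_subset[OF S] by auto
  obtain na where na: "E q na" "na \<in> set (tpath E q a)" "q \<notin> set (tpath E na a)"
    using tpath_second_vertex[OF q(1) V(1)] assms(6) by auto
  obtain nb where nb: "E q nb" "nb \<in> set (tpath E q b)" "q \<notin> set (tpath E nb b)"
    using tpath_second_vertex[OF q(1) V(2)] assms(6) by auto
  obtain nd where nd: "E q nd" "nd \<in> set (tpath E q d)" "q \<notin> set (tpath E nd d)"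
    using tpath_second_vertex[OF q(1) V(3)] assms(6) by auto
  have nV: "na \<in> V" "nb \<in> V" using na nb edge_in_V by auto
  have "na \<noteq> nb" using notin_tpath_via[OF V(1,2) nV(1) na(3)] nb(3) assms(7) by blast
  moreover have "na \<noteq> nd" using notin_tpath_via[OF V(1,3) nV(1) na(3)] nd(3) assms(8) by blast
  moreover have "nb \<noteq> nd" using notin_tpath_via[OF V(2,3) nV(2) nb(3)] nd(3) assms(9) by blast
  ultimately have "card {na, nb, nd} = 3" by simp
  moreover have "{na, nb, nd} \<subseteq> {w \<in> S. E q w}"
    using na nb nd q(2) assms(3-5) by blast
  moreover have "finite {w \<in> S. E q w}" using finite_subset[OF _ finite_V] S(2) by auto
  ultimately show ?thesis unfolding deg_in_def by (metis card_mono)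
qed

subsection \<open>Components of \<open>EZ E Z\<close>\<close>

lemma notin_tpath_if_reach_in_EZ:
  assumes "S \<subseteq> V" "p \<in> Z" "x \<in> Z \<inter> S - {p}" "reach_in (EZ E Z) (Z \<inter> S - {p}) x y"
  shows "p \<notin> set (tpath E x y)"
  using assms(4)
proof (induction rule: reach_in_induct)
  case base
  show ?case using assms(1,3) by (auto simp: tpath_refl)
next
  case (step y z)
  have V: "x \<in> V" "y \<in> V" "z \<in> V" using assms(1,3) step.hyps(2,3) by auto
  have "Pint E y z \<inter> Z = {}" using step.hyps(4) unfolding EZ_def by blast
  then have "p \<notin> set (tpath E y z)" using assms(2) step.hyps(2,3) unfolding Pint_def by auto
  then show ?case using set_tpath_triangle[OF V] step.IH by blast
qed

lemma reach_in_EZ_if_notin_tpath: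
  assumes "connected_set E S" "S \<subseteq> V" "p \<in> Z"
  shows "x \<in> Z \<inter> S - {p} \<Longrightarrow> y \<in> Z \<inter> S - {p} \<Longrightarrow> p \<notin> set (tpath E x y) \<Longrightarrow>
    reach_in (EZ E Z) (Z \<inter> S - {p}) x y"
proof (induction "length (tpath E x y)" arbitrary: x y rule: less_induct)
  case less
  have V: "x \<in> V" "y \<in> V" using less.prems assms by auto
  show ?case
  proof (cases "x = y \<or> Pint E x y \<inter> Z = {}")
    case True
    then consider "x = y" | "EZ E Z x y" using less.prems unfolding EZ_def by blast
    then show ?thesis
    proof cases
      case 1
      then show ?thesis by (simp add: reach_in_refl)
    next
      case 2
      then show ?thesis using less.prems by (intro reach_in_ConsI[OF _ _ _ reach_in_refl])
    qed
  next
    case False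
    then obtain z where z: "z \<in> set (tpath E x y)" "z \<noteq> x" "z \<noteq> y" "z \<in> Z"
      unfolding Pint_def by auto
    have "z \<in> Z \<inter> S - {p}"
      using connected_set_tpath_subset[OF assms(1,2)] less.prems z by blast
    moreover have "p \<notin> set (tpath E x z)" "p \<notin> set (tpath E z y)"
      using set_tpath_split[OF V z(1)] less.prems by auto
    moreover have "length (tpath E x z) < length (tpath E x y)"
      "length (tpath E z y) < length (tpath E x y)"
      using length_tpath_prefix_less[OF V z(1,3)] length_tpath_suffix_less[OF V z(1,2)] .
    ultimately have "reach_in (EZ E Z) (Z \<inter> S - {p}) x z" "reach_in (EZ E Z) (Z \<inter> S - {p}) z y"
      using less.hyps less.prems by simp_all
    then show ?thesis by (rule reach_in_trans)
  qed
qed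

lemma comps_EZ_Diff:
  assumes "connected_set E S" "S \<subseteq> V" "p \<in> Z" "Q \<in> comps (EZ E Z) (Z \<inter> S - {p})"
  obtains x where "x \<in> Z \<inter> S - {p}" "Q = {y \<in> Z \<inter> S - {p}. p \<notin> set (tpath E x y)}"
proof -
  obtain x where x: "x \<in> Z \<inter> S - {p}"
    "Q = {y \<in> Z \<inter> S - {p}. reach_in (EZ E Z) (Z \<inter> S - {p}) x y}"
    using assms(4) unfolding comps_def by blast
  have "Q = {y \<in> Z \<inter> S - {p}. p \<notin> set (tpath E x y)}"
    unfolding x(2) using notin_tpath_if_reach_in_EZ[OF assms(2,3) x(1)]
      reach_in_EZ_if_notin_tpath[OF assms(1-3) x(1)] by blast
  then show ?thesis using that x(1) by blast
qed

lemma comps_EZ_Diff_restriction: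
  assumes "connected_set E S" "S \<subseteq> V" "p \<in> Z"
    and through_p: "\<And>z z'. z \<in> Z \<inter> S \<Longrightarrow> z' \<in> Z \<inter> S \<Longrightarrow> v \<in> set (tpath E z z') \<Longrightarrow>
      p \<in> set (tpath E z z')"
    and "Q \<in> comps (EZ E Z) (Z \<inter> S - {p})"
  obtains K where "connected_set E K" "K \<subseteq> S - {v}" "Q = Z \<inter> K"
proof -
  obtain x where x: "x \<in> Z \<inter> S - {p}" "Q = {y \<in> Z \<inter> S - {p}. p \<notin> set (tpath E x y)}"
    using comps_EZ_Diff[OF assms(1-3,5)] .
  have xV: "x \<in> V" using x(1) assms(2) by blast
  have "x \<noteq> v" using through_p[of x x] x(1) tpath_refl[OF xV] by auto
  then have x': "x \<in> S - {v, p}" using x(1) by blast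
  define K where "K = {y \<in> S - {v, p}. set (tpath E x y) \<inter> {v, p} = {}}"
  have "connected_set E K"
    unfolding K_def by (rule connected_tpath_avoiding[OF assms(1,2) x'])
  moreover have "K \<subseteq> S - {v}" unfolding K_def by blast
  moreover have "Q = Z \<inter> K"
  proof
    show "Z \<inter> K \<subseteq> Q" unfolding K_def x(2) by blast
    show "Q \<subseteq> Z \<inter> K"
    proof
      fix y assume y: "y \<in> Q"
      then have yV: "y \<in> V" using x(2) assms(2) by blast
      have "v \<notin> set (tpath E x y)" using y x through_p by blast
      moreover have "y \<in> set (tpath E x y)" by (rule end_in_tpath[OF xV yV])
      ultimately show "y \<in> Z \<inter> K" using y x(2) unfolding K_def by auto
    qed
  qed
  ultimately show ?thesis by (rule that)
qed

end

subsection \<open>Projecting decision trees\<close>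

locale tree_projection = tree_graph V E for V :: "'a set" and E +
  fixes Z :: "'a set" and c :: "'a \<Rightarrow> real"
  assumes Z_subset_V: "Z \<subseteq> V"
    and cost_nonneg: "\<And>v. v \<in> V \<Longrightarrow> 0 \<le> c v"
    and cheaper_separator: "\<And>z1 z2 v. z1 \<in> Z \<Longrightarrow> z2 \<in> Z \<Longrightarrow> v \<in> set (tpath E z1 z2) \<Longrightarrow> v \<notin> Z \<Longrightarrow>
      \<exists>p\<in>Z. c p \<le> c v \<and> (\<forall>z\<in>Z. \<forall>z'\<in>Z. v \<in> set (tpath E z z') \<longrightarrow> p \<in> set (tpath E z z'))"
begin

lemma projection_root_cases:
  assumes S: "connected_set E S" "S \<subseteq> V" and "v \<in> V" "Z \<inter> S \<noteq> {}"
  obtains (no_root) K where "connected_set E K" "K \<subseteq> S - {v}" "Z \<inter> S = Z \<inter> K"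
  | (root) p where "p \<in> Z \<inter> S" "c p \<le> c v"
      "\<And>Q. Q \<in> comps (EZ E Z) (Z \<inter> S - {p}) \<Longrightarrow>
        \<exists>K. connected_set E K \<and> K \<subseteq> S - {v} \<and> Q = Z \<inter> K"
proof -
  consider "v \<notin> S" | "v \<in> Z \<inter> S"
    | "v \<in> S - Z" "\<forall>z1\<in>Z \<inter> S. \<forall>z2\<in>Z \<inter> S. v \<notin> set (tpath E z1 z2)"
    | z1 z2 where "v \<in> S - Z" "z1 \<in> Z \<inter> S" "z2 \<in> Z \<inter> S" "v \<in> set (tpath E z1 z2)"
    by blast
  then show ?thesis
  proof cases
    case 1
    then show ?thesis using no_root[OF S(1)] by blast
  next
    case 2
    have "\<exists>K. connected_set E K \<and> K \<subseteq> S - {v} \<and> Q = Z \<inter> K"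
      if "Q \<in> comps (EZ E Z) (Z \<inter> S - {v})" for Q
      using comps_EZ_Diff_restriction[OF S _ _ that] 2 by blast
    then show ?thesis using root[of v] 2 by blast
  next
    case 3
    obtain z0 where z0: "z0 \<in> Z \<inter> S" using assms(4) by blast
    then have z0': "z0 \<in> S - {v}" using 3(1) by blast
    define K where "K = {y \<in> S - {v}. set (tpath E z0 y) \<inter> {v} = {}}"
    have "connected_set E K"
      unfolding K_def by (rule connected_tpath_avoiding[OF S z0'])
    moreover have "Z \<inter> S = Z \<inter> K" using 3 z0 unfolding K_def by blast
    ultimately show ?thesis using no_root[of K] unfolding K_def by blast
  next
    case 4
    then obtain p where p: "p \<in> Z" "c p \<le> c v"
      "\<forall>z\<in>Z. \<forall>z'\<in>Z. v \<in> set (tpath E z z') \<longrightarrow> p \<in> set (tpath E z z')"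
      using cheaper_separator by blast
    have "p \<in> S" using p(3) 4 connected_set_tpath_subset[OF S] by blast
    moreover have "\<exists>K. connected_set E K \<and> K \<subseteq> S - {v} \<and> Q = Z \<inter> K"
      if "Q \<in> comps (EZ E Z) (Z \<inter> S - {p})" for Q
      using comps_EZ_Diff_restriction[OF S p(1) _ that] p(3) by blast
    ultimately show ?thesis using root p by blast
  qed
qed

lemma ex_projected_dt_step:
  assumes S: "connected_set E S" "S \<subseteq> V" and "v \<in> V" "Z \<inter> S \<noteq> {}" "0 \<le> M"
    and below: "\<And>K. connected_set E K \<Longrightarrow> K \<subseteq> S - {v} \<Longrightarrow> Z \<inter> K \<noteq> {} \<Longrightarrow>
      \<exists>t. is_dt (EZ E Z) (Z \<inter> K) t \<and> dt_cost c t \<le> M"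
  shows "\<exists>t. is_dt (EZ E Z) (Z \<inter> S) t \<and> dt_cost c t \<le> c v + M"
proof (rule projection_root_cases[OF S assms(3,4)])
  fix K assume "connected_set E K" "K \<subseteq> S - {v}" "Z \<inter> S = Z \<inter> K"
  then show ?thesis using below[of K] assms(3,4) cost_nonneg by fastforce
next
  fix p assume root: "p \<in> Z \<inter> S" "c p \<le> c v"
    "\<And>Q. Q \<in> comps (EZ E Z) (Z \<inter> S - {p}) \<Longrightarrow>
      \<exists>K. connected_set E K \<and> K \<subseteq> S - {v} \<and> Q = Z \<inter> K"
  have "finite (Z \<inter> S)" using finite_subset[OF _ finite_V] S(2) by blast
  moreover have "\<exists>t. is_dt (EZ E Z) Q t \<and> dt_cost c t \<le> M"
    if Q: "Q \<in> comps (EZ E Z) (Z \<inter> S - {p})" for Q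
    using root(3)[OF Q] below comps_nonempty[OF Q] by blast
  ultimately show ?thesis using ex_dt_with_root[OF root(1) _ assms(5)] root(2) by fastforce
qed

text \<open>Generalised to connected \<open>S' \<subseteq> S\<close>: the parts of \<open>T\<^sub>Z\<close> handed down to a
  subtree are traces of connected subsets of its vertex set, not of the whole set.\<close>

lemma ex_projected_dt:
  "is_dt E S t \<Longrightarrow> S \<subseteq> V \<Longrightarrow> S' \<subseteq> S \<Longrightarrow> connected_set E S' \<Longrightarrow> Z \<inter> S' \<noteq> {} \<Longrightarrow>
   \<exists>t'. is_dt (EZ E Z) (Z \<inter> S') t' \<and> dt_cost c t' \<le> dt_cost c t"
proof (induction t arbitrary: S S')
  case (Node v ts)
  define M where "M = foldr max (map (dt_cost c) ts) 0"
  have "v \<in> S" and comps_ts: "set (map dt_verts ts) = comps E (S - {v})"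
    and is_dt_ts: "\<forall>t\<in>set ts. is_dt E (dt_verts t) t"
    using Node.prems(1) by (auto simp: list_all_iff)
  then have "v \<in> V" using Node.prems(2) by blast
  have "0 \<le> M" unfolding M_def by (rule foldr_max_nonneg)
  have IH: "\<exists>t'. is_dt (EZ E Z) (Z \<inter> K) t' \<and> dt_cost c t' \<le> M"
    if K: "connected_set E K" "K \<subseteq> S - {v}" "Z \<inter> K \<noteq> {}" for K
  proof -
    obtain C where "C \<in> comps E (S - {v})" "K \<subseteq> C"
      using connected_subset_in_comps[OF K(1,2)] .
    moreover obtain t where "t \<in> set ts" "dt_verts t = C"
      using calculation(1) comps_ts by (metis imageE set_map)
    moreover have "C \<subseteq> V" using calculation(1) comps_subset Node.prems(2) by blast
    ultimately obtain t' where "is_dt (EZ E Z) (Z \<inter> K) t'" "dt_cost c t' \<le> dt_cost c t"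
      using Node.IH is_dt_ts K(1,3) by metis
    moreover have "dt_cost c t \<le> M" unfolding M_def using \<open>t \<in> set ts\<close> by (simp add: foldr_max_upper)
    ultimately show ?thesis by auto
  qed
  have "\<exists>t'. is_dt (EZ E Z) (Z \<inter> S') t' \<and> dt_cost c t' \<le> c v + M"
  proof (rule ex_projected_dt_step[OF Node.prems(4) _ \<open>v \<in> V\<close> Node.prems(5) \<open>0 \<le> M\<close>])
    show "S' \<subseteq> V" using Node.prems(2,3) by blast
    fix K assume "connected_set E K" "K \<subseteq> S' - {v}" "Z \<inter> K \<noteq> {}"
    then show "\<exists>t. is_dt (EZ E Z) (Z \<inter> K) t \<and> dt_cost c t \<le> M"
      using IH[of K] Node.prems(3) by blast
  qed
  then show ?case unfolding M_def by simp
qed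

lemma OPT_EZ_le: "OPT (EZ E Z) Z c \<le> OPT E V c"
proof (cases "Z = {}")
  case True
  have "0 \<le> OPT E V c"
    by (rule OPT_greatest[OF finite_V V_nonempty])
      (metis dt_cost_nonneg dt_verts_if_is_dt cost_nonneg)
  then show ?thesis using True by (simp add: OPT_def)
next
  case False
  show ?thesis
  proof (rule OPT_greatest[OF finite_V V_nonempty])
    fix t assume "is_dt E V t"
    then obtain t' where "is_dt (EZ E Z) Z t'" "dt_cost c t' \<le> dt_cost c t"
      using ex_projected_dt[OF _ order_refl order_refl connected_V] Z_subset_V False
      by (auto simp: Int_absorb2)
    moreover have "OPT (EZ E Z) Z c \<le> dt_cost c t'"
      using calculation(1) False Z_subset_V cost_nonneg by (intro OPT_le_dt_cost) auto
    ultimately show "OPT (EZ E Z) Z c \<le> dt_cost c t" by linarith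
  qed
qed

end

subsection \<open>The construction of \<open>Z\<close>\<close>

locale Z_construction = tree_graph V E for V :: "'a set" and E +
  fixes S :: "'a set" and Y :: "'a set" and f :: "'a \<Rightarrow> 'a \<Rightarrow> 'a" and c :: "'a \<Rightarrow> real"
  assumes connected_S: "connected_set E S" and S_subset_V: "S \<subseteq> V" and Y_subset_S: "Y \<subseteq> S"
    and branching_in_Y: "\<And>q. q \<in> S \<Longrightarrow> 3 \<le> deg_in E S q \<Longrightarrow> q \<in> Y"
    and valid_pick_f: "valid_pick E c Y f"
begin

abbreviation "Z \<equiv> Z_of E Y f"

lemma tpath_subset_S: "x \<in> S \<Longrightarrow> y \<in> S \<Longrightarrow> set (tpath E x y) \<subseteq> S"
  using connected_set_tpath_subset[OF connected_S S_subset_V] by blast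

lemma pick_props:
  "u \<in> Y \<Longrightarrow> w \<in> Y \<Longrightarrow> Pint E u w \<noteq> {} \<Longrightarrow> Pint E u w \<inter> Y = {} \<Longrightarrow>
    f u w = f w u \<and> f u w \<in> Pint E u w \<and> (\<forall>x\<in>Pint E u w. c (f u w) \<le> c x)"
  using valid_pick_f unfolding valid_pick_def by blast

lemma Z_of_cases:
  assumes "z \<in> Z"
  obtains "z \<in> Y"
  | u w where "u \<in> Y" "w \<in> Y" "Pint E u w \<noteq> {}" "Pint E u w \<inter> Y = {}" "z = f u w"
  using assms unfolding Z_of_def by blast

lemma Y_subset_Z: "Y \<subseteq> Z"
  unfolding Z_of_def by blast

lemma Y_subset_V: "Y \<subseteq> V"
  using Y_subset_S S_subset_V by blast

lemma Z_subset_S: "Z \<subseteq> S"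
proof
  fix z assume "z \<in> Z"
  then show "z \<in> S"
  proof (cases rule: Z_of_cases)
    case 1
    then show ?thesis using Y_subset_S by blast
  next
    case (2 u w)
    then have "z \<in> set (tpath E u w)" using pick_props Pint_subset by blast
    then show ?thesis using tpath_subset_S 2 Y_subset_S by blast
  qed
qed

lemma Z_subset_V: "Z \<subseteq> V"
  using Z_subset_S S_subset_V by blast

lemma in_Y_if_separates_three:
  assumes "q \<in> S" "a \<in> S" "b \<in> S" "d \<in> S" "q \<notin> {a, b, d}"
    "q \<in> set (tpath E a b)" "q \<in> set (tpath E a d)" "q \<in> set (tpath E b d)"
  shows "q \<in> Y"
  using branching_in_Y[OF assms(1) three_le_deg_in[OF connected_S S_subset_V assms(2-8)]] .

end

locale Z_construction_at = Z_construction V E S Y f c for V :: "'a set" and E S Y f c +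
  fixes v :: 'a
  assumes v_in_S: "v \<in> S" and v_notin_Z: "v \<notin> Z_of E Y f"
begin

lemma v_in_V: "v \<in> V"
  using v_in_S S_subset_V by blast

lemma v_notin_Y: "v \<notin> Y"
  using v_notin_Z Y_subset_Z by blast

lemma ex_Y_same_side:
  assumes "z \<in> Z"
  obtains y where "y \<in> Y" "v \<notin> set (tpath E z y)"
  using assms
proof (cases rule: Z_of_cases)
  case 1
  then have "tpath E z z = [z]" "v \<noteq> z" using Y_subset_V v_notin_Y tpath_refl by auto
  then show ?thesis using that[of z] 1 by simp
next
  case (2 a b)
  have z: "z \<in> set (tpath E a b)" using pick_props[OF 2(1-4)] 2(5) Pint_subset by blast
  have V: "a \<in> V" "b \<in> V" "z \<in> V" using 2 Y_subset_V assms Z_subset_V by auto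
  have "v \<noteq> z" using v_notin_Z assms by blast
  then have "v \<notin> set (tpath E a z) \<or> v \<notin> set (tpath E z b)"
    using set_tpath_split(3)[OF V(1,2) z] by blast
  then show ?thesis using that 2(1,2) notin_tpath_commute[OF V(1,3)] by blast
qed

text \<open>\<open>v \<notin> set (tpath E u y)\<close> says that \<open>y\<close> lies on the same side of \<open>v\<close> as \<open>u\<close>.\<close>

definition nearest :: "'a \<Rightarrow> bool" where
  "nearest u \<longleftrightarrow> u \<in> Y \<and>
    (\<forall>y\<in>Y. v \<notin> set (tpath E u y) \<longrightarrow> length (tpath E u v) \<le> length (tpath E y v))"

lemma nearest_in_Y: "nearest u \<Longrightarrow> u \<in> Y"
  unfolding nearest_def by blast

lemma ex_nearest:
  assumes "y0 \<in> Y"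
  obtains u where "nearest u" "v \<notin> set (tpath E y0 u)"
proof -
  have y0V: "y0 \<in> V" using assms Y_subset_V by blast
  have "y0 \<in> Y \<and> v \<notin> set (tpath E y0 y0)" using assms v_notin_Y tpath_refl[OF y0V] by auto
  then obtain u where u: "u \<in> Y" "v \<notin> set (tpath E y0 u)"
    "\<And>y. y \<in> Y \<and> v \<notin> set (tpath E y0 y) \<Longrightarrow> length (tpath E u v) \<le> length (tpath E y v)"
    using ex_has_least_nat[of "\<lambda>y. y \<in> Y \<and> v \<notin> set (tpath E y0 y)" y0 "\<lambda>y. length (tpath E y v)"]
    by blast
  have "nearest u" unfolding nearest_def
  proof (intro conjI ballI impI)
    fix y assume "y \<in> Y" "v \<notin> set (tpath E u y)"
    then show "length (tpath E u v) \<le> length (tpath E y v)"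
      using u notin_tpath_trans[of y0 u y] y0V Y_subset_V by blast
  qed (fact u(1))
  then show ?thesis using that u(2) by blast
qed

lemma nearest_unique_on_tpath:
  assumes "nearest u" "y \<in> Y" "y \<in> set (tpath E u v)"
  shows "y = u"
proof (rule ccontr)
  assume "y \<noteq> u"
  have V: "u \<in> V" "y \<in> V" using assms nearest_in_Y Y_subset_V by auto
  have "v \<in> set (tpath E y v)" "v \<noteq> y" using end_in_tpath V v_in_V assms(2) v_notin_Y by auto
  then have "v \<notin> set (tpath E u y)" using set_tpath_split(3)[OF V(1) v_in_V assms(3)] by blast
  then have "length (tpath E u v) \<le> length (tpath E y v)"
    using assms(1,2) unfolding nearest_def by blast
  moreover have "length (tpath E y v) < length (tpath E u v)"
    using length_tpath_suffix_less[OF V(1) v_in_V assms(3) \<open>y \<noteq> u\<close>] .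
  ultimately show False by simp
qed

text \<open>The median of \<open>u\<close>, \<open>y\<close> and \<open>v\<close> lies on the path from \<open>u\<close> to \<open>v\<close>; it separates
  \<open>u\<close>, \<open>y\<close>, \<open>v\<close> pairwise unless it is \<open>u\<close> or \<open>y\<close>, so it must be \<open>u\<close>.\<close>

lemma nearest_on_tpath:
  assumes "nearest u" "y \<in> Y" "v \<notin> set (tpath E u y)"
  shows "u \<in> set (tpath E y v)"
proof -
  have uY: "u \<in> Y" using assms(1) nearest_in_Y by blast
  have V: "u \<in> V" "y \<in> V" using uY assms Y_subset_V by auto
  obtain m where m: "m \<in> set (tpath E u y)" "m \<in> set (tpath E y v)" "m \<in> set (tpath E u v)"
    using tpath_median[OF V v_in_V] by blast
  have "m \<in> Y" if "m \<noteq> u" "m \<noteq> y"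
  proof -
    have "m \<noteq> v" using m(1) assms(3) by blast
    moreover have "m \<in> S" using tpath_subset_S[of u v] uY Y_subset_S v_in_S m(3) by blast
    ultimately show ?thesis
      using in_Y_if_separates_three[of m u y v] uY assms(2) Y_subset_S v_in_S that m by blast
  qed
  then have "m = u" using nearest_unique_on_tpath[OF assms(1)] m(3) assms(2) by blast
  then show ?thesis using m(2) by simp
qed

lemma not_separates_three_Y:
  assumes "u \<in> Y" "w \<in> Y" "y \<in> Y"
    "v \<in> set (tpath E u w)" "v \<in> set (tpath E u y)" "v \<in> set (tpath E w y)"
  shows False
  using in_Y_if_separates_three[OF v_in_S, of u w y] assms Y_subset_S v_notin_Y by blast

lemma not_separates_Y_Y_Z:
  assumes "u \<in> Y" "w \<in> Y" "v \<in> set (tpath E u w)" "z \<in> Z"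
  shows "v \<notin> set (tpath E u z) \<or> v \<notin> set (tpath E w z)"
proof (rule ccontr)
  assume a: "\<not> ?thesis"
  obtain y where y: "y \<in> Y" "v \<notin> set (tpath E z y)" using ex_Y_same_side[OF assms(4)] .
  have V: "u \<in> V" "w \<in> V" "y \<in> V" "z \<in> V" using assms y Y_subset_V Z_subset_V by auto
  have "v \<notin> set (tpath E y z)" using notin_tpath_commute[OF V(4,3)] y by blast
  then have "v \<in> set (tpath E u y)" "v \<in> set (tpath E w y)"
    using notin_tpath_trans[OF V(1,3,4)] notin_tpath_trans[OF V(2,3,4)] a by blast+
  then show False using not_separates_three_Y assms y by blast
qed

lemma Pint_nearest_disjoint:
  assumes "nearest u" "nearest w"
  shows "Pint E u w \<inter> Y = {}"
proof (rule ccontr)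
  assume "Pint E u w \<inter> Y \<noteq> {}"
  then obtain y where y: "y \<in> Y" "y \<in> set (tpath E u w)" "y \<noteq> u" "y \<noteq> w"
    unfolding Pint_def by blast
  have V: "u \<in> V" "w \<in> V" using assms nearest_in_Y Y_subset_V by auto
  have "y \<in> set (tpath E u v) \<or> y \<in> set (tpath E w v)"
    using set_tpath_triangle[OF V(1) v_in_V V(2)] y(2) set_tpath_commute[OF v_in_V V(2)] by blast
  then show False using nearest_unique_on_tpath[OF _ y(1)] assms y(3,4) by blast
qed

lemma pick_nearest:
  assumes "nearest u" "nearest w" "v \<in> set (tpath E u w)"
  shows "f u w = f w u" "f u w \<in> Pint E u w" "c (f u w) \<le> c v" "f u w \<in> Z"
proof -
  have "u \<in> Y" "w \<in> Y" using assms(1,2) nearest_in_Y by auto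
  moreover have "v \<in> Pint E u w" using assms(3) v_notin_Y calculation unfolding Pint_def by auto
  moreover note Pint_nearest_disjoint[OF assms(1,2)]
  ultimately show "f u w = f w u" "f u w \<in> Pint E u w" "c (f u w) \<le> c v" "f u w \<in> Z"
    using pick_props unfolding Z_of_def by blast+
qed

lemma Y_free_tpath_across:
  assumes u: "nearest u" and w: "nearest w" and vuw: "v \<in> set (tpath E u w)"
    and y: "y \<in> Y" "y' \<in> Y" "Pint E y y' \<inter> Y = {}" "z \<in> set (tpath E y y')"
    and vuz: "v \<notin> set (tpath E u z)" and vuy: "v \<in> set (tpath E u y)"
  shows "y = w \<and> y' = u"
proof -
  have uY: "u \<in> Y" and wY: "w \<in> Y" using u w nearest_in_Y by auto
  have V: "u \<in> V" "w \<in> V" "y \<in> V" "y' \<in> V" using uY wY y Y_subset_V by auto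
  have zV: "z \<in> V" using tpath_in_V V(3,4) y(4) by blast
  have vwy: "v \<notin> set (tpath E w y)"
    using not_separates_Y_Y_Z[OF uY wY vuw] y(1) Y_subset_Z vuy by blast
  have vuy': "v \<notin> set (tpath E u y')"
  proof
    assume "v \<in> set (tpath E u y')"
    then have "v \<notin> set (tpath E w y')"
      using not_separates_Y_Y_Z[OF uY wY vuw] y(2) Y_subset_Z by blast
    then have "v \<notin> set (tpath E y y')"
      using notin_tpath_trans[OF V(3,2,4)] notin_tpath_commute[OF V(2,3) vwy] by blast
    then have "v \<notin> set (tpath E z y)"
      using set_tpath_split(1)[OF V(3,4) y(4)] set_tpath_commute[OF V(3) zV] by blast
    then show False using notin_tpath_trans[OF V(1) zV V(3)] vuz vuy by blast
  qed
  have vyy': "v \<in> set (tpath E y y')"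
  proof (rule ccontr)
    assume "v \<notin> set (tpath E y y')"
    then have "v \<notin> set (tpath E w y')" using notin_tpath_trans[OF V(2,3,4)] vwy by blast
    then have "v \<notin> set (tpath E w u)"
      using notin_tpath_trans[OF V(2,4,1)] notin_tpath_commute[OF V(1,4) vuy'] by blast
    then show False using vuw set_tpath_commute[OF V(1,2)] by blast
  qed
  have "w \<in> set (tpath E y v)" "u \<in> set (tpath E v y')"
    using nearest_on_tpath[OF w y(1) vwy] nearest_on_tpath[OF u y(2) vuy']
      set_tpath_commute[OF V(4) v_in_V] by auto
  then have "w \<in> set (tpath E y y')" "u \<in> set (tpath E y y')"
    using set_tpath_split(1,2)[OF V(3,4) vyy'] by auto
  then have "w \<in> {y, y'}" "u \<in> {y, y'}" using y(3) uY wY unfolding Pint_def by blast+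
  moreover have "u \<noteq> y" using vuy tpath_refl[OF V(1)] v_notin_Y uY by auto
  moreover have "w \<noteq> y'" using vuy' vuw by blast
  ultimately show ?thesis by blast
qed

lemma nearest_on_tpath_from_Z:
  assumes u: "nearest u" and w: "nearest w" and vuw: "v \<in> set (tpath E u w)"
    and z: "z \<in> Z" and vuz: "v \<notin> set (tpath E u z)"
  shows "z = f u w \<or> u \<in> set (tpath E z v)"
  using z
proof (cases rule: Z_of_cases)
  case 1
  have "u \<in> V" "z \<in> V" using u nearest_in_Y Y_subset_V 1 by auto
  then show ?thesis using nearest_on_tpath[OF u 1] vuz notin_tpath_commute by blast
next
  case (2 y y')
  have uV: "u \<in> V" using u nearest_in_Y Y_subset_V by auto
  have V: "y \<in> V" "y' \<in> V" using 2 Y_subset_V by auto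
  have "z \<in> set (tpath E y y')" using pick_props[OF 2(1-4)] 2(5) Pint_subset by blast
  moreover have fyy': "f y y' = f y' y" using pick_props[OF 2(1-4)] by blast
  moreover have "Pint E y' y \<inter> Y = {}" using 2(4) Pint_commute[OF V] by simp
  moreover note pick_nearest(1)[OF u w vuw]
  ultimately consider "v \<in> set (tpath E u y) \<or> v \<in> set (tpath E u y')" "z = f u w"
    | "v \<notin> set (tpath E u y)" "v \<notin> set (tpath E u y')" "z \<in> set (tpath E y y')"
    using Y_free_tpath_across[OF u w vuw] 2 vuz set_tpath_commute[OF V] by metis
  then show ?thesis
  proof cases
    case 2
    have "u \<in> set (tpath E y v)" "u \<in> set (tpath E y' v)"
      using nearest_on_tpath[OF u] 2(1,2) \<open>y \<in> Y\<close> \<open>y' \<in> Y\<close> by blast+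
    moreover have "z \<in> set (tpath E y u) \<or> z \<in> set (tpath E y' u)"
      using set_tpath_triangle[OF V(1) uV V(2)] 2(3) set_tpath_commute[OF uV V(2)] by blast
    ultimately show ?thesis
      using tpath_betw_trans[OF V(1) v_in_V] tpath_betw_trans[OF V(2) v_in_V] by blast
  qed blast
qed

lemma pick_on_tpath_to_v:
  assumes u: "nearest u" and w: "nearest w" and vuw: "v \<in> set (tpath E u w)"
    and fuv: "f u w \<in> set (tpath E u v)" and z: "z \<in> Z" "v \<notin> set (tpath E u z)"
  shows "f u w \<in> set (tpath E z v)"
proof -
  have zV: "z \<in> V" using z Z_subset_V by blast
  from nearest_on_tpath_from_Z[OF u w vuw z] show ?thesis
  proof
    assume "u \<in> set (tpath E z v)"
    then show ?thesis using set_tpath_split(2)[OF zV v_in_V] fuv by blast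
  qed (use start_in_tpath zV v_in_V in blast)
qed

lemma pick_on_tpath_through_v:
  assumes u: "nearest u" and w: "nearest w" and vuw: "v \<in> set (tpath E u w)"
    and fuv: "f u w \<in> set (tpath E u v)" and z: "z \<in> Z" "z' \<in> Z" "v \<in> set (tpath E z z')"
  shows "f u w \<in> set (tpath E z z')"
proof -
  have uY: "u \<in> Y" and wY: "w \<in> Y" using u w nearest_in_Y by auto
  have V: "w \<in> V" "z \<in> V" "z' \<in> V" using wY Y_subset_V z Z_subset_V by auto
  consider "v \<notin> set (tpath E u z)" | "v \<notin> set (tpath E u z')"
    | "v \<notin> set (tpath E w z)" "v \<notin> set (tpath E w z')"
    using not_separates_Y_Y_Z[OF uY wY vuw] z(1,2) by blast
  then show ?thesis
  proof cases
    case 1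
    then have "f u w \<in> set (tpath E z v)" using pick_on_tpath_to_v[OF u w vuw fuv z(1)] by blast
    then show ?thesis using set_tpath_split(1)[OF V(2,3) z(3)] by blast
  next
    case 2
    then have "f u w \<in> set (tpath E z' v)" using pick_on_tpath_to_v[OF u w vuw fuv z(2)] by blast
    moreover have "v \<in> set (tpath E z' z)" using z(3) set_tpath_commute[OF V(2,3)] by blast
    ultimately show ?thesis using set_tpath_split(1)[OF V(3,2)] set_tpath_commute[OF V(2,3)] by blast
  next
    case 3
    then have "v \<notin> set (tpath E z z')"
      using notin_tpath_trans[OF V(2,1,3)] notin_tpath_commute[OF V(1,2)] by blast
    then show ?thesis using z(3) by blast
  qed
qed

lemma ex_nearest_across:
  assumes "z1 \<in> Z" "z2 \<in> Z" "v \<in> set (tpath E z1 z2)"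
  obtains u w where "nearest u" "nearest w" "v \<in> set (tpath E u w)"
proof -
  have Vz: "z1 \<in> V" "z2 \<in> V" using assms Z_subset_V by auto
  obtain ya where ya: "ya \<in> Y" "v \<notin> set (tpath E z1 ya)" using ex_Y_same_side[OF assms(1)] .
  obtain yb where yb: "yb \<in> Y" "v \<notin> set (tpath E z2 yb)" using ex_Y_same_side[OF assms(2)] .
  obtain u where u: "nearest u" "v \<notin> set (tpath E ya u)" using ex_nearest[OF ya(1)] .
  obtain w where w: "nearest w" "v \<notin> set (tpath E yb w)" using ex_nearest[OF yb(1)] .
  have V: "ya \<in> V" "yb \<in> V" "u \<in> V" "w \<in> V"
    using ya yb u w nearest_in_Y Y_subset_V by auto
  have "v \<in> set (tpath E u w)"
  proof (rule ccontr)
    assume "v \<notin> set (tpath E u w)"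
    then have "v \<notin> set (tpath E z1 w)"
      using notin_tpath_trans[OF Vz(1) V(1,3)] notin_tpath_trans[OF Vz(1) V(3,4)] ya u by blast
    then have "v \<notin> set (tpath E z1 yb)"
      using notin_tpath_trans[OF Vz(1) V(4,2)] notin_tpath_commute[OF V(2,4)] w by blast
    then have "v \<notin> set (tpath E z1 z2)"
      using notin_tpath_trans[OF Vz(1) V(2) Vz(2)] notin_tpath_commute[OF Vz(2) V(2)] yb by blast
    then show False using assms(3) by blast
  qed
  then show ?thesis using that u(1) w(1) by blast
qed

lemma ex_cheaper_separator:
  assumes "z1 \<in> Z" "z2 \<in> Z" "v \<in> set (tpath E z1 z2)"
  shows "\<exists>p\<in>Z. c p \<le> c v \<and> (\<forall>z\<in>Z. \<forall>z'\<in>Z. v \<in> set (tpath E z z') \<longrightarrow> p \<in> set (tpath E z z'))"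
proof -
  obtain u w where u: "nearest u" and w: "nearest w" and vuw: "v \<in> set (tpath E u w)"
    using ex_nearest_across[OF assms] .
  have V: "u \<in> V" "w \<in> V" using u w nearest_in_Y Y_subset_V by auto
  have vwu: "v \<in> set (tpath E w u)" using vuw set_tpath_commute[OF V] by blast
  note pick = pick_nearest[OF u w vuw]
  have "f u w \<in> set (tpath E u v) \<or> f u w \<in> set (tpath E w v)"
    using set_tpath_triangle[OF V(1) v_in_V V(2)] pick(2) Pint_subset
      set_tpath_commute[OF v_in_V V(2)] by blast
  then have "\<forall>z\<in>Z. \<forall>z'\<in>Z. v \<in> set (tpath E z z') \<longrightarrow> f u w \<in> set (tpath E z z')"
    using pick_on_tpath_through_v[OF u w vuw] pick_on_tpath_through_v[OF w u vwu] pick(1) by metis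
  then show ?thesis using pick(3,4) by blast
qed

end

context Z_construction
begin

lemma cheaper_separator_Z_of:
  assumes "z1 \<in> Z" "z2 \<in> Z" "v \<in> set (tpath E z1 z2)" "v \<notin> Z"
  shows "\<exists>p\<in>Z. c p \<le> c v \<and> (\<forall>z\<in>Z. \<forall>z'\<in>Z. v \<in> set (tpath E z z') \<longrightarrow> p \<in> set (tpath E z z'))"
proof -
  have "v \<in> S" using tpath_subset_S assms(1-3) Z_subset_S by blast
  then interpret Z_construction_at V E S Y f c v using assms(4) by unfold_locales
  show ?thesis using ex_cheaper_separator[OF assms(1-3)] .
qed

end

context tree_graph
begin

lemma Y_of_empty: "Y_of V E {} = {}"
proof -
  have "deg_in E (span V E {}) y < 3" if y: "y \<in> span V E {}" for y
  proof -
    have "span V E {} \<subseteq> V" unfolding span_def using connected_V by blast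
    then have yV: "y \<in> V" using y by blast
    have "connected_set E {y}" unfolding connected_set_def by (simp add: reach_in_refl)
    then have "span V E {} \<subseteq> {y}" unfolding span_def using yV by blast
    then have e: "{w \<in> span V E {}. E y w} = {}" using edge_in_V by blast
    show ?thesis unfolding deg_in_def e by simp
  qed
  then show ?thesis unfolding Y_of_def by force
qed

lemma Z_construction_span:
  assumes "X \<subseteq> V" "X \<noteq> {}" "valid_pick E c (Y_of V E X) f"
  shows "Z_construction V E (span V E X) (Y_of V E X) f c"
proof (intro Z_construction.intro Z_construction_axioms.intro)
  show "tree_graph V E" by (rule tree_graph_axioms)
  show "connected_set E (span V E X)" "span V E X \<subseteq> V"
    using connected_span span_subset_V assms(1,2) by blast+
  show "Y_of V E X \<subseteq> span V E X"
    unfolding Y_of_def using subset_span[OF assms(1,2)] by blast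
  show "q \<in> Y_of V E X" if "q \<in> span V E X" "3 \<le> deg_in E (span V E X) q" for q
    unfolding Y_of_def using that by blast
qed (fact assms(3))

lemma tree_projection_Z_of:
  assumes "X \<subseteq> V" "\<And>v. v \<in> V \<Longrightarrow> 0 \<le> c v" "valid_pick E c (Y_of V E X) f"
  shows "tree_projection V E (Z_of E (Y_of V E X) f) c"
proof (cases "X = {}")
  case True
  then have "Z_of E (Y_of V E X) f = {}" by (simp add: Y_of_empty Z_of_def)
  then show ?thesis
    using assms(2) by (intro tree_projection.intro tree_projection_axioms.intro tree_graph_axioms) auto
next
  case False
  then interpret Z_construction V E "span V E X" "Y_of V E X" f c
    using Z_construction_span assms(1,3) by blast
  show ?thesis
    using Z_subset_V assms(2) cheaper_separator_Z_of
    by (intro tree_projection.intro tree_projection_axioms.intro tree_graph_axioms) auto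
qed

end

theorem lemma12:
  fixes V :: "'a set" and E :: "'a \<Rightarrow> 'a \<Rightarrow> bool" and c :: "'a \<Rightarrow> real"
    and a :: real and X :: "'a set" and f :: "'a \<Rightarrow> 'a \<Rightarrow> 'a"
  assumes "is_tree V E"
    and "\<forall>v\<in>V. c v > 0"
    and "a \<ge> 0"
    and "\<exists>v\<in>V. c v \<le> a"
    and "valid_X V E c a X"
    and "valid_pick E c (Y_of V E X) f"
  shows "OPT (EZ E (Z_of E (Y_of V E X) f)) (Z_of E (Y_of V E X) f) c \<le> OPT E V c"
proof -
  interpret tree_graph V E by (rule tree_graph.intro) (fact assms(1))
  have "X \<subseteq> V"
    using assms(5) unfolding valid_X_def heavy_module_def Let_def by blast
  then interpret tree_projection V E "Z_of E (Y_of V E X) f" c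
    using assms(2,6) by (intro tree_projection_Z_of) auto
  show ?thesis by (rule OPT_EZ_le)
qed

end
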